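(* For each positive integer $n$, let $A_n=\{a_{0n},\dots,a_{nn}\}$ with $(a_{0n},\dots,a_{nn})\in[0,1]^{n+1}$ a minimizer of $$(x_0,\dots,x_n)\mapsto \max_{p\in[0,1]}\sum_{k=0}^n\binom{n}{k}p^k(1-p)^{n-k}|p-x_k|$$ over $[0,1]^{n+1}$. Then the normalized counting measures $\frac{1}{n+1}\sum_{j=0}^n\delta_{a_{jn}}$ converge weak$^*$ to Lebesgue measure $dx$ on $[0,1]$ as $n\to\infty$.
   Context: $\delta_x$ denotes the unit point mass at $x$. Weak$^*$ convergence of measures $\mu_n\to\mu$ on $[0,1]$ means $\int g\,d\mu_n\to\int g\,d\mu$ for all $g\in C[0,1]$. *)

theory Defs
  imports "HOL-Analysis.Analysis"
begin

text \<open>The sum is continuous in p, so the supremum over the compact [0,1] is a max.\<close>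
definition bern_err :: "nat \<Rightarrow> (nat \<Rightarrow> real) \<Rightarrow> real" where
  "bern_err n x = (SUP p\<in>{0..1::real}.
      (\<Sum>k=0..n. real (n choose k) * p ^ k * (1 - p) ^ (n - k) * \<bar>p - x k\<bar>))"

definition is_minimizer :: "nat \<Rightarrow> (nat \<Rightarrow> real) \<Rightarrow> bool" where
  "is_minimizer n x \<longleftrightarrow> (\<forall>k\<le>n. x k \<in> {0..1}) \<and>
     (\<forall>y. (\<forall>k\<le>n. y k \<in> {0..1}) \<longrightarrow> bern_err n x \<le> bern_err n y)"

end

theory Submission
  imports Defs "HOL-Real_Asymp.Real_Asymp"
begin

text \<open>
  Every Bernstein basis polynomial of degree n has integral 1/(n+1) over [0,1], so the average
  of g over a_{0n}, ..., a_{nn} equals the integral of the Bernstein-type combination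
  \<Sum>j g(a_{jn}) b_{nj}(p). This combination is uniformly close to g, with error controlled by
  \<Sum>j b_{nj}(p) |p - a_{jn}|, the very quantity the minimizer makes small: comparing with the
  grid points j/n, whose error is at most 1/\<surd>n by the Bernstein variance identity, shows it is
  O(1/\<surd>n).
\<close>

lemma Bernstein_integrable: "Bernstein n k integrable_on {a..b}"
  unfolding Bernstein_def by (intro integrable_continuous_real continuous_intros)

lemma has_real_derivative_Bernstein_primitive:
  assumes "k < n"
  shows "((\<lambda>x. real (n choose k) * x ^ Suc k * (1 - x) ^ (n - k) / real (Suc k))
           has_real_derivative (Bernstein n k x - Bernstein n (Suc k) x)) (at x)"
proof -
  have deriv: "((\<lambda>x. c * x ^ Suc k * (1 - x) ^ Suc m / real (Suc k)) has_real_derivative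
      c * x ^ k * (1 - x) ^ Suc m - c * real (Suc m) / real (Suc k) * x ^ Suc k * (1 - x) ^ m) (at x)"
    for c m by (rule derivative_eq_intros refl | simp)+ (simp add: field_simps)
  have nk: "Suc (n - Suc k) = n - k" using assms by simp
  have absorb: "real (n choose k) * real (n - k) / real (Suc k) = real (n choose Suc k)"
  proof -
    have "(n - k) * (n choose k) = Suc k * (n choose Suc k)"
      using binomial_absorb_comp[of n k] binomial_absorption[of k n] by simp
    then show ?thesis by (simp add: field_simps flip: of_nat_mult)
  qed
  from deriv[of "real (n choose k)" "n - Suc k"] show ?thesis
    unfolding nk absorb Bernstein_def .
qed

lemma integral_Bernstein_Suc:
  assumes "k < n"
  shows "integral {0..1} (Bernstein n (Suc k)) = integral {0..1} (Bernstein n k)"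
proof -
  let ?F = "\<lambda>x. real (n choose k) * x ^ Suc k * (1 - x) ^ (n - k) / real (Suc k)"
  have "((\<lambda>x. Bernstein n k x - Bernstein n (Suc k) x) has_integral (?F 1 - ?F 0)) {0..1}"
  proof (rule fundamental_theorem_of_calculus)
    fix x :: real
    show "(?F has_vector_derivative Bernstein n k x - Bernstein n (Suc k) x) (at x within {0..1})"
      using has_real_derivative_Bernstein_primitive[OF assms, of x]
      by (simp add: has_real_derivative_iff_has_vector_derivative has_vector_derivative_at_within)
  qed simp
  moreover have "?F 1 - ?F 0 = 0" using assms by simp
  ultimately have "integral {0..1} (\<lambda>x. Bernstein n k x - Bernstein n (Suc k) x) = 0"
    by (simp add: integral_unique)
  then show ?thesis
    using integral_diff[OF Bernstein_integrable[of n k 0 1] Bernstein_integrable[of n "Suc k" 0 1]] by simp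
qed

lemma integral_Bernstein:
  assumes "k \<le> n"
  shows "integral {0..1} (Bernstein n k) = 1 / real (Suc n)"
proof -
  have same: "integral {0..1} (Bernstein n j) = integral {0..1} (Bernstein n 0)" if "j \<le> n" for j
    using that by (induction j) (simp_all add: integral_Bernstein_Suc)
  have "1 = integral {0..1} (\<lambda>x. \<Sum>j\<le>n. Bernstein n j x)"
    by simp
  also have "\<dots> = (\<Sum>j\<le>n. integral {0..1} (Bernstein n j))"
    by (intro integral_sum) (auto intro: Bernstein_integrable)
  also have "\<dots> = (\<Sum>j\<le>n. integral {0..1} (Bernstein n 0))"
    by (rule sum.cong) (auto intro: same)
  finally show ?thesis
    using same[OF assms] by (simp add: field_simps)
qed

lemma average_eq_integral_Bernstein:
  "(\<Sum>j\<le>n. c j) / real (Suc n) = integral {0..1} (\<lambda>p. \<Sum>j\<le>n. c j * Bernstein n j p)"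
proof -
  have "integral {0..1} (\<lambda>p. \<Sum>j\<le>n. c j * Bernstein n j p)
        = (\<Sum>j\<le>n. c j * integral {0..1} (Bernstein n j))"
    using integrable_on_cmult_left[OF Bernstein_integrable]
    by (subst integral_sum) auto
  also have "\<dots> = (\<Sum>j\<le>n. c j) / real (Suc n)"
    by (simp add: integral_Bernstein sum_divide_distrib)
  finally show ?thesis ..
qed

lemma sum_Bernstein_sq_dev:
  assumes "n > 0"
  shows "(\<Sum>k\<le>n. (x - k / n)\<^sup>2 * Bernstein n k x) = x * (1 - x) / n"
proof -
  have expand: "(x - k / n)\<^sup>2 * B = x\<^sup>2 * B - 2 * x / n * (real k * B)
      + 1 / n ^ 2 * (real k * (real k - 1) * B) + 1 / n ^ 2 * (real k * B)" for k B
    using assms by (simp add: field_simps power2_eq_square)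
  have "(\<Sum>k\<le>n. (x - k / n)\<^sup>2 * Bernstein n k x) =
      x\<^sup>2 * (\<Sum>k\<le>n. Bernstein n k x) - 2 * x / n * (\<Sum>k\<le>n. real k * Bernstein n k x)
      + 1 / n ^ 2 * (\<Sum>k\<le>n. real k * (real k - 1) * Bernstein n k x)
      + 1 / n ^ 2 * (\<Sum>k\<le>n. real k * Bernstein n k x)"
    by (simp only: expand sum.distrib sum_subtractf sum_distrib_left)
  also have "\<dots> = x * (1 - x) / n"
    using assms
    by (simp only: sum_Bernstein sum_k_Bernstein sum_kk_Bernstein) (simp add: field_simps power2_eq_square)
  finally show ?thesis .
qed

lemma sum_Bernstein_abs_dev_le:
  assumes "n \<ge> 1" and p: "p \<in> {0..1}"
  shows "(\<Sum>k\<le>n. Bernstein n k p * \<bar>p - k / n\<bar>) \<le> 1 / sqrt n"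
proof -
  define s where "s = sqrt n"
  have s: "s > 0" "s * s = n" using assms by (simp_all add: s_def)
  \<comment> \<open>AM-GM, weighted so that both terms contribute 1/(2s) after summation\<close>
  have am_gm: "\<bar>t\<bar> \<le> (s * t\<^sup>2 + 1 / s) / 2" for t
  proof -
    have "0 \<le> (s * \<bar>t\<bar> - 1)\<^sup>2 / (2 * s)" using s by simp
    also have "\<dots> = (s * t\<^sup>2 + 1 / s) / 2 - \<bar>t\<bar>"
      using s by (simp add: field_simps power2_eq_square)
    finally show ?thesis by simp
  qed
  have B: "0 \<le> Bernstein n k p" for k using p by (simp add: Bernstein_nonneg)
  have "(\<Sum>k\<le>n. Bernstein n k p * \<bar>p - k / n\<bar>)
        \<le> (\<Sum>k\<le>n. Bernstein n k p * ((s * (p - k / n)\<^sup>2 + 1 / s) / 2))"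
    by (intro sum_mono mult_left_mono am_gm B)
  also have "\<dots> = (s * (\<Sum>k\<le>n. (p - k / n)\<^sup>2 * Bernstein n k p)
                  + 1 / s * (\<Sum>k\<le>n. Bernstein n k p)) / 2"
  proof -
    have "Bernstein n k p * ((s * (p - k / n)\<^sup>2 + 1 / s) / 2) =
          (s * ((p - k / n)\<^sup>2 * Bernstein n k p) + 1 / s * Bernstein n k p) / 2" for k
      by (simp add: algebra_simps)
    then show ?thesis
      by (simp only: sum_divide_distrib[symmetric] sum.distrib sum_distrib_left)
  qed
  also have "\<dots> = (s * (p * (1 - p) / n) + 1 / s) / 2"
    using assms by (simp add: sum_Bernstein_sq_dev)
  also have "\<dots> \<le> (s * (1 / n) + 1 / s) / 2"
  proof -
    have "p * (1 - p) / n \<le> 1 / n"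
      using p mult_le_one[of p "1 - p"] by (simp add: divide_right_mono)
    then have "s * (p * (1 - p) / n) \<le> s * (1 / n)"
      using s assms by (intro mult_left_mono) auto
    from divide_right_mono[OF add_right_mono[OF this], of 2 "1 / s"] show ?thesis by simp
  qed
  also have "\<dots> = 1 / s" using s assms by (simp add: field_simps)
  finally show ?thesis by (simp add: s_def)
qed

lemma bern_err_eq_SUP_Bernstein:
  "bern_err n x = (SUP p\<in>{0..1}. \<Sum>k\<le>n. Bernstein n k p * \<bar>p - x k\<bar>)"
  unfolding bern_err_def Bernstein_def atLeast0AtMost ..

lemma Bernstein_abs_dev_le_bern_err:
  assumes x: "\<forall>k\<le>n. x k \<in> {0..1}" and p: "p \<in> {0..1}"
  shows "(\<Sum>k\<le>n. Bernstein n k p * \<bar>p - x k\<bar>) \<le> bern_err n x"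
  unfolding bern_err_eq_SUP_Bernstein
proof (rule cSUP_upper[OF p], rule bdd_aboveI2)
  fix q :: real assume q: "q \<in> {0..1}"
  have "(\<Sum>k\<le>n. Bernstein n k q * \<bar>q - x k\<bar>) \<le> (\<Sum>k\<le>n. Bernstein n k q * 1)"
    using x q by (intro sum_mono mult_left_mono) (auto simp: Bernstein_nonneg abs_le_iff)
  then show "(\<Sum>k\<le>n. Bernstein n k q * \<bar>q - x k\<bar>) \<le> 1" by simp
qed

lemma bern_err_grid_le:
  assumes "n \<ge> 1"
  shows "bern_err n (\<lambda>k. k / n) \<le> 1 / sqrt n"
  unfolding bern_err_eq_SUP_Bernstein
  using assms by (intro cSUP_least) (auto intro: sum_Bernstein_abs_dev_le)

lemma is_minimizer_abs_dev_le:
  assumes "n \<ge> 1" and x: "is_minimizer n x" and p: "p \<in> {0..1}"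
  shows "(\<Sum>k\<le>n. Bernstein n k p * \<bar>p - x k\<bar>) \<le> 1 / sqrt n"
proof -
  have "\<forall>k\<le>n. real k / real n \<in> {0..1}" using assms by auto
  then have "bern_err n x \<le> bern_err n (\<lambda>k. k / n)"
    using x by (simp add: is_minimizer_def)
  then show ?thesis
    using Bernstein_abs_dev_le_bern_err[OF _ p, of n x] x bern_err_grid_le[OF assms(1)]
    by (simp add: is_minimizer_def)
qed

lemma continuous_on_compact_dist_le_affine:
  fixes g :: "'a::metric_space \<Rightarrow> 'b::real_normed_vector"
  assumes "compact S" and "continuous_on S g" and "e > 0"
  obtains C where "C \<ge> 0" and "\<And>x y. x \<in> S \<Longrightarrow> y \<in> S \<Longrightarrow> dist (g x) (g y) \<le> e + C * dist x y"
proof -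
  obtain B where B: "B > 0" "\<And>x. x \<in> S \<Longrightarrow> norm (g x) \<le> B"
    using compact_imp_bounded[OF compact_continuous_image[OF assms(2,1)]]
    by (auto simp: bounded_pos)
  obtain d where d: "d > 0" "\<And>x y. x \<in> S \<Longrightarrow> y \<in> S \<Longrightarrow> dist y x < d \<Longrightarrow> dist (g y) (g x) < e"
    using uniformly_continuous_onE[OF compact_uniformly_continuous[OF assms(2,1)] assms(3)] by metis
  have "dist (g x) (g y) \<le> e + 2 * B / d * dist x y" if "x \<in> S" "y \<in> S" for x y
  proof (cases "dist x y < d")
    case True
    have "0 \<le> 2 * B / d * dist x y" using B(1) d(1) by simp
    then show ?thesis
      using d(2)[OF that(2,1)] True by (simp add: dist_commute)
  next
    case False
    have "dist (g x) (g y) \<le> 2 * B"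
      using B(2)[OF that(1)] B(2)[OF that(2)] norm_triangle_ineq4[of "g x" "g y"]
      by (simp add: dist_norm)
    also have "\<dots> \<le> 2 * B / d * dist x y"
      using False B(1) d(1) by (simp add: field_simps)
    finally show ?thesis using assms(3) by simp
  qed
  then show ?thesis
    using B(1) d(1) that[of "2 * B / d"] by simp
qed

lemma Bernstein_combination_dev_le:
  fixes g :: "real \<Rightarrow> real"
  assumes modulus: "\<And>u v. u \<in> {0..1} \<Longrightarrow> v \<in> {0..1} \<Longrightarrow> \<bar>g u - g v\<bar> \<le> e + C * \<bar>u - v\<bar>"
    and x: "\<forall>k\<le>n. x k \<in> {0..1}" and p: "p \<in> {0..1}"
  shows "\<bar>(\<Sum>k\<le>n. g (x k) * Bernstein n k p) - g p\<bar>
         \<le> e + C * (\<Sum>k\<le>n. Bernstein n k p * \<bar>p - x k\<bar>)"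
proof -
  have B: "0 \<le> Bernstein n k p" for k using p by (simp add: Bernstein_nonneg)
  have "(\<Sum>k\<le>n. g (x k) * Bernstein n k p) - g p = (\<Sum>k\<le>n. Bernstein n k p * (g (x k) - g p))"
    using sum_Bernstein[of n p] by (simp add: algebra_simps sum_subtractf flip: sum_distrib_left)
  also have "\<bar>\<dots>\<bar> \<le> (\<Sum>k\<le>n. Bernstein n k p * (e + C * \<bar>p - x k\<bar>))"
    using modulus[of "x _" p] x p B
    by (intro order.trans[OF sum_abs] sum_mono) (simp add: abs_mult mult_left_mono abs_minus_commute)
  also have "\<dots> = e * (\<Sum>k\<le>n. Bernstein n k p) + C * (\<Sum>k\<le>n. Bernstein n k p * \<bar>p - x k\<bar>)"
  proof -
    have "Bernstein n k p * (e + C * \<bar>p - x k\<bar>) = e * Bernstein n k p + C * (Bernstein n k p * \<bar>p - x k\<bar>)"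
      for k by (simp add: algebra_simps)
    then show ?thesis by (simp only: sum.distrib sum_distrib_left)
  qed
  also have "\<dots> = e + C * (\<Sum>k\<le>n. Bernstein n k p * \<bar>p - x k\<bar>)"
    by simp
  finally show ?thesis .
qed

lemma is_minimizer_average_dev_le:
  fixes g :: "real \<Rightarrow> real"
  assumes "n \<ge> 1" and x: "is_minimizer n x" and g: "continuous_on {0..1} g" and "C \<ge> 0"
    and modulus: "\<And>u v. u \<in> {0..1} \<Longrightarrow> v \<in> {0..1} \<Longrightarrow> \<bar>g u - g v\<bar> \<le> e + C * \<bar>u - v\<bar>"
  shows "\<bar>(\<Sum>j\<le>n. g (x j)) / real (Suc n) - integral {0..1} g\<bar> \<le> e + C / sqrt n"
proof -
  define F where "F p = (\<Sum>j\<le>n. g (x j) * Bernstein n j p)" for p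
  have F: "F integrable_on {0..1}"
    unfolding F_def Bernstein_def by (intro integrable_continuous_real continuous_intros)
  have G: "g integrable_on {0..1}"
    using g by (rule integrable_continuous_real)
  have pointwise: "\<bar>F p - g p\<bar> \<le> e + C / sqrt n" if p: "p \<in> {0..1}" for p
  proof -
    have "\<bar>F p - g p\<bar> \<le> e + C * (\<Sum>k\<le>n. Bernstein n k p * \<bar>p - x k\<bar>)"
      unfolding F_def using x p by (intro Bernstein_combination_dev_le modulus) (auto simp: is_minimizer_def)
    also have "\<dots> \<le> e + C * (1 / sqrt n)"
      using mult_left_mono[OF is_minimizer_abs_dev_le[OF assms(1) x p] \<open>C \<ge> 0\<close>] by simp
    finally show ?thesis by simp
  qed
  have "(\<Sum>j\<le>n. g (x j)) / real (Suc n) - integral {0..1} g = integral {0..1} (\<lambda>p. F p - g p)"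
    using integral_diff[OF F G] average_eq_integral_Bernstein[of "\<lambda>j. g (x j)" n]
    unfolding F_def by simp
  also have "\<bar>\<dots>\<bar> \<le> e + C / sqrt n"
    using integral_norm_bound_integral[OF integrable_diff[OF F G] integrable_const_ivl] pointwise
    by simp
  finally show ?thesis .
qed

theorem corollary3p5:
  fixes a :: "nat \<Rightarrow> nat \<Rightarrow> real"
  assumes "\<And>n. n \<ge> 1 \<Longrightarrow> is_minimizer n (a n)"
  shows "\<And>g. continuous_on {0..1} g \<Longrightarrow>
    (\<lambda>n. (\<Sum>j=0..n. g (a n j)) / real (n + 1)) \<longlonglongrightarrow> integral {0..1::real} g"
proof (rule LIMSEQ_I)
  fix g :: "real \<Rightarrow> real" and r :: real
  assume g: "continuous_on {0..1} g" and r: "r > 0"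
  have "r / 2 > 0" using r by simp
  then obtain C where "C \<ge> 0" and C: "\<And>u v. u \<in> {0..1} \<Longrightarrow> v \<in> {0..1} \<Longrightarrow> dist (g u) (g v) \<le> r / 2 + C * dist u v"
    using continuous_on_compact_dist_le_affine[OF compact_Icc g] by blast
  have "(\<lambda>n::nat. C / sqrt n) \<longlonglongrightarrow> 0" by real_asymp
  then have "eventually (\<lambda>n. C / sqrt n < r / 2) sequentially"
    by (rule order_tendstoD(2)) (use r in simp)
  then obtain N :: nat where N: "\<And>n. n \<ge> N \<Longrightarrow> C / sqrt n < r / 2"
    unfolding eventually_sequentially by blast
  have "\<forall>n\<ge>max N 1. norm ((\<Sum>j=0..n. g (a n j)) / real (n + 1) - integral {0..1} g) < r"
  proof (intro allI impI)
    fix n assume n: "n \<ge> max N 1"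
    have "\<bar>(\<Sum>j\<le>n. g (a n j)) / real (Suc n) - integral {0..1} g\<bar> \<le> r / 2 + C / sqrt n"
      using n by (intro is_minimizer_average_dev_le assms g \<open>C \<ge> 0\<close> C[unfolded dist_real_def]) auto
    moreover have "C / sqrt n < r / 2"
      using N n by simp
    ultimately show "norm ((\<Sum>j=0..n. g (a n j)) / real (n + 1) - integral {0..1} g) < r"
      unfolding atLeast0AtMost Suc_eq_plus1 real_norm_def by linarith
  qed
  then show "\<exists>N. \<forall>n\<ge>N. norm ((\<Sum>j=0..n. g (a n j)) / real (n + 1) - integral {0..1} g) < r"
    by blast
qed

end
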